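(* Let $(\mathcal A,\mathbb E)$ be a $B$-valued probability space and $a,b\in\mathcal A$ free. If $\tau\in Y^{be}_{2n}$ and $\sigma\in Y^{bo}_{2n+1}$ ($n\ge0$), then for all $x_1,y_1,\dots,x_n,y_n,x_{n+1}\in B$, $$\kappa_\tau(x_1a,y_1b,\dots,x_na,y_nb)=(k^a\cup k^b)_\tau(x_1,y_1,\dots,x_n,y_n),$$ $$\kappa_\sigma(x_1a,y_1b,\dots,x_na,y_nb,x_{n+1}a)=(k^b\cup k^a)_\sigma(x_1,y_1,\dots,x_n,y_n,x_{n+1}).$$
   Context: $B$ is a unital algebra over a field $\mathbb K$ of characteristic zero. $B$-valued probability space $(\mathcal A,\mathbb E)$: $\mathcal A$ a unital $\mathbb K$-algebra and $B$-bimodule with all mixed triple products associative; $\mathbb E:\mathcal A\to B$ linear, unital, $\mathbb E(xay)=x\mathbb E(a)y$. Freeness of $a,b$: for the $B$-subalgebras $\mathcal A_1,\mathcal A_2$ they generate, $\mathbb E(a_1\cdots a_n)=0$ whenever $n\ge1$, each $\mathbb E(a_i)=0$, $a_i\in\mathcal A_{j_i}$, $j_i\neq j_{i+1}$. Planar binary trees: $Y_0=\{|\}$, $Y_n=\{\sigma\vee\tau:|\sigma|+|\tau|=n-1\}$ ($\sigma\vee\tau$: root with left subtree $\sigma$, right subtree $\tau$). Each $\tau\in Y_n$, $n\ge1$, is uniquely $\tau_1\vee(\tau_2\vee(\cdots\vee(\tau_k\vee|)))$; $j_i=|\tau_1|+\dots+|\tau_i|+i$. $Y^{be}=\{|\}\cup\{\sigma\vee\rho:\sigma\in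 Y^{bo},\rho\in Y^{be}\}$ and $Y^{bo}=\{\sigma\vee\rho:\sigma,\rho\in Y^{be}\}$ (joint recursive definition); subscripts indicate the number of vertices. Cumulants: multilinear $\kappa_n:\mathcal A^n\to B$ defined by $\mathbb E(a_1\cdots a_n)=\sum_{\tau\in Y_n}\kappa_\tau(a_1,\dots,a_n)$, $\kappa_|=1$, $\kappa_\tau(a_1,\dots,a_n)=\kappa_k(\kappa_{\tau_1}(a_1,\dots,a_{j_1-1})a_{j_1},\dots,\kappa_{\tau_k}(a_{j_{k-1}+1},\dots,a_{j_k-1})a_{j_k})$. For $c\in\mathcal A$: $k^c_0=0$, $k^c_n(x_1,\dots,x_n)=\kappa_n(x_1c,\dots,x_nc)$. For sequences $f,g$ of multilinear maps $B^n\to B$: $(f\cup g)_|=1$, $(f\cup g)_\tau(x_1,\dots,x_n)=g_k((g\cup f)_{\tau_1}(x_1,\dots,x_{j_1-1})x_{j_1},\dots,(g\cup f)_{\tau_k}(x_{j_{k-1}+1},\dots,x_{j_k-1})x_{j_k})$. *)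

theory Defs
  imports Main
begin

text \<open>A is a unital ring (type 'a) with left action lm and right action rm of B; the K-action on
A is the one induced through iota (lm (iota c) a = rm a (iota c)), which makes A a unital
K-algebra and a K-linear B-bimodule.\<close>

definition B_prob_space ::
  "('k::field_char_0 \<Rightarrow> 'b::ring_1) \<Rightarrow> ('b \<Rightarrow> 'a::ring_1 \<Rightarrow> 'a) \<Rightarrow> ('a \<Rightarrow> 'b \<Rightarrow> 'a)
     \<Rightarrow> ('a \<Rightarrow> 'b) \<Rightarrow> bool" where
  "B_prob_space iota lm rm E \<longleftrightarrow>
     \<comment> \<open>B is a unital K-algebra\<close>
     iota 1 = 1 \<and> (\<forall>c d. iota (c + d) = iota c + iota d) \<and> (\<forall>c d. iota (c * d) = iota c * iota d)
     \<and> (\<forall>c x. iota c * x = x * iota c)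
     \<comment> \<open>A is a B-bimodule (compatible with the K-structure)\<close>
     \<and> (\<forall>x y a. lm (x + y) a = lm x a + lm y a) \<and> (\<forall>x a b. lm x (a + b) = lm x a + lm x b)
     \<and> (\<forall>x y a. lm (x * y) a = lm x (lm y a)) \<and> (\<forall>a. lm 1 a = a)
     \<and> (\<forall>x y a. rm a (x + y) = rm a x + rm a y) \<and> (\<forall>x a b. rm (a + b) x = rm a x + rm b x)
     \<and> (\<forall>x y a. rm a (x * y) = rm (rm a x) y) \<and> (\<forall>a. rm a 1 = a)
     \<and> (\<forall>x y a. lm x (rm a y) = rm (lm x a) y)
     \<and> (\<forall>c a. lm (iota c) a = rm a (iota c))
     \<comment> \<open>all mixed triple products are associative\<close>
     \<and> (\<forall>x a b. lm x (a * b) = lm x a * b)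
     \<and> (\<forall>x a b. rm (a * b) x = a * rm b x)
     \<and> (\<forall>x a b. rm a x * b = a * lm x b)
     \<comment> \<open>E is linear, unital and a B-bimodule map\<close>
     \<and> (\<forall>a b. E (a + b) = E a + E b) \<and> E 1 = 1
     \<and> (\<forall>x a y. E (lm x (rm a y)) = x * E a * y)"

inductive_set Bsubalg :: "('b::ring_1 \<Rightarrow> 'a::ring_1 \<Rightarrow> 'a) \<Rightarrow> ('a \<Rightarrow> 'b \<Rightarrow> 'a) \<Rightarrow> 'a \<Rightarrow> 'a set"
  for lm rm c where
  gen: "c \<in> Bsubalg lm rm c"
| one: "1 \<in> Bsubalg lm rm c"
| add: "u \<in> Bsubalg lm rm c \<Longrightarrow> v \<in> Bsubalg lm rm c \<Longrightarrow> u + v \<in> Bsubalg lm rm c"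
| mult: "u \<in> Bsubalg lm rm c \<Longrightarrow> v \<in> Bsubalg lm rm c \<Longrightarrow> u * v \<in> Bsubalg lm rm c"
| lact: "u \<in> Bsubalg lm rm c \<Longrightarrow> lm x u \<in> Bsubalg lm rm c"
| ract: "u \<in> Bsubalg lm rm c \<Longrightarrow> rm u x \<in> Bsubalg lm rm c"

text \<open>Freeness of a and b: alternating products of centred elements have expectation 0.
The boolean in each pair records from which subalgebra (True: that of a) the element is.\<close>

definition free_pair ::
  "('b::ring_1 \<Rightarrow> 'a::ring_1 \<Rightarrow> 'a) \<Rightarrow> ('a \<Rightarrow> 'b \<Rightarrow> 'a) \<Rightarrow> ('a \<Rightarrow> 'b) \<Rightarrow> 'a \<Rightarrow> 'a \<Rightarrow> bool" where
  "free_pair lm rm E a b \<longleftrightarrow>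
     (\<forall>ps :: ('a \<times> bool) list. ps \<noteq> []
        \<and> (\<forall>i < length ps. fst (ps ! i) \<in> (if snd (ps ! i) then Bsubalg lm rm a else Bsubalg lm rm b)
                           \<and> E (fst (ps ! i)) = 0)
        \<and> (\<forall>i. Suc i < length ps \<longrightarrow> snd (ps ! i) \<noteq> snd (ps ! Suc i))
        \<longrightarrow> E (prod_list (map fst ps)) = 0)"

datatype ptree = Leaf | Node ptree ptree  \<comment> \<open>Node l r = l \<or> r\<close>

fun nodes :: "ptree \<Rightarrow> nat" where
  "nodes Leaf = 0"
| "nodes (Node l r) = Suc (nodes l + nodes r)"

definition Y :: "nat \<Rightarrow> ptree set" where
  "Y n = {t. nodes t = n}"

fun Ybe :: "ptree \<Rightarrow> bool" and Ybo :: "ptree \<Rightarrow> bool" where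
  "Ybe Leaf = True"
| "Ybe (Node s r) = (Ybo s \<and> Ybe r)"
| "Ybo Leaf = False"
| "Ybo (Node s r) = (Ybe s \<and> Ybe r)"

text \<open>For tau = tau_1 v (tau_2 v ( ... v (tau_k v |))), kblocks gives the list of the k
arguments kappa_{tau_i}(a_{j_(i-1)+1},...,a_{j_i - 1}) a_{j_i}; kappa is a function on lists
(the length of the list being the arity n).\<close>

fun kblocks :: "('b::ring_1 \<Rightarrow> 'a \<Rightarrow> 'a) \<Rightarrow> ('a list \<Rightarrow> 'b) \<Rightarrow> ptree \<Rightarrow> 'a list \<Rightarrow> 'a list" where
  "kblocks lm \<kappa> Leaf as = []"
| "kblocks lm \<kappa> (Node l r) as =
     lm (if l = Leaf then 1 else \<kappa> (kblocks lm \<kappa> l (take (nodes l) as))) (as ! nodes l)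
     # kblocks lm \<kappa> r (drop (Suc (nodes l)) as)"

definition ktree :: "('b::ring_1 \<Rightarrow> 'a \<Rightarrow> 'a) \<Rightarrow> ('a list \<Rightarrow> 'b) \<Rightarrow> ptree \<Rightarrow> 'a list \<Rightarrow> 'b" where
  "ktree lm \<kappa> t as = (if t = Leaf then 1 else \<kappa> (kblocks lm \<kappa> t as))"

definition is_cumulants :: "('b::ring_1 \<Rightarrow> 'a::ring_1 \<Rightarrow> 'a) \<Rightarrow> ('a \<Rightarrow> 'b) \<Rightarrow> ('a list \<Rightarrow> 'b) \<Rightarrow> bool" where
  "is_cumulants lm E \<kappa> \<longleftrightarrow>
     (\<forall>as. E (prod_list as) = (\<Sum>t \<in> Y (length as). ktree lm \<kappa> t as))"

definition kc :: "('b::ring_1 \<Rightarrow> 'a \<Rightarrow> 'a) \<Rightarrow> ('a list \<Rightarrow> 'b) \<Rightarrow> 'a \<Rightarrow> 'b list \<Rightarrow> 'b" where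
  "kc lm \<kappa> c xs = (if xs = [] then 0 else \<kappa> (map (\<lambda>x. lm x c) xs))"

text \<open>cblocks f g t xs are the arguments of g_k in (f \<union> g)_t(xs); the inner maps are
(g \<union> f)_{t_i}.\<close>

fun cblocks :: "('b::ring_1 list \<Rightarrow> 'b) \<Rightarrow> ('b list \<Rightarrow> 'b) \<Rightarrow> ptree \<Rightarrow> 'b list \<Rightarrow> 'b list" where
  "cblocks f g Leaf xs = []"
| "cblocks f g (Node l r) xs =
     (if l = Leaf then 1 else f (cblocks g f l (take (nodes l) xs))) * (xs ! nodes l)
     # cblocks f g r (drop (Suc (nodes l)) xs)"

definition cup :: "('b::ring_1 list \<Rightarrow> 'b) \<Rightarrow> ('b list \<Rightarrow> 'b) \<Rightarrow> ptree \<Rightarrow> 'b list \<Rightarrow> 'b" where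
  "cup f g t xs = (if t = Leaf then 1 else g (cblocks f g t xs))"

definition alt_args :: "('b \<Rightarrow> 'a \<Rightarrow> 'a) \<Rightarrow> 'a \<Rightarrow> 'a \<Rightarrow> 'b list \<Rightarrow> 'b list \<Rightarrow> 'a list" where
  "alt_args lm a b xs ys = concat (map (\<lambda>(x, y). [lm x a, lm y b]) (zip xs ys))"

definition interleave :: "'b list \<Rightarrow> 'b list \<Rightarrow> 'b list" where
  "interleave xs ys = concat (map (\<lambda>(x, y). [x, y]) (zip xs ys))"

end

theory Submission
  imports Defs
begin

text \<open>Feed kappa the arguments z_1 c, z_2 d, z_3 c, ... By induction on the tree, an even
subtree consumes an even number of arguments, so the pattern continues unchanged after it,
while an odd subtree ends on a c and hands on the pattern with c and d swapped. Absorbing the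
prefactor kappa_{tau_i}(...) into the coefficient of a_{j_i}, the inner cumulants become k^c or
k^d of the plain coefficients, which is the block structure of f \<union> g with f and g
interchanged at each level. Only lm (x * y) = lm x o lm y and lm 1 = id are used.\<close>

fun alternate :: "('b::ring_1 \<Rightarrow> 'a \<Rightarrow> 'a) \<Rightarrow> 'a \<Rightarrow> 'a \<Rightarrow> 'b list \<Rightarrow> 'a list" where
  "alternate lm c d [] = []"
| "alternate lm c d (z # zs) = lm z c # alternate lm d c zs"

lemma length_alternate [simp]: "length (alternate lm c d zs) = length zs"
  by (induction zs arbitrary: c d) auto

lemma take_alternate: "take k (alternate lm c d zs) = alternate lm c d (take k zs)"
  by (induction zs arbitrary: c d k) (auto simp: take_Cons split: nat.splits)

lemma drop_alternate:
  "drop k (alternate lm c d zs) =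
     (if even k then alternate lm c d (drop k zs) else alternate lm d c (drop k zs))"
  by (induction zs arbitrary: c d k) (auto simp: drop_Cons split: nat.splits)

lemma nth_alternate:
  "i < length zs \<Longrightarrow> alternate lm c d zs ! i = lm (zs ! i) (if even i then c else d)"
  by (induction zs arbitrary: c d i) (auto simp: nth_Cons split: nat.splits)

lemma alternate_append:
  "alternate lm c d (zs @ ws) =
     alternate lm c d zs @ (if even (length zs) then alternate lm c d ws else alternate lm d c ws)"
  by (induction zs arbitrary: c d) auto

lemma alt_args_eq_alternate:
  "length xs = length ys \<Longrightarrow> alt_args lm a b xs ys = alternate lm a b (interleave xs ys)"
  by (induction xs ys rule: list_induct2) (auto simp: alt_args_def interleave_def)

lemma length_interleave: "length xs = length ys \<Longrightarrow> length (interleave xs ys) = 2 * length xs"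
  by (induction xs ys rule: list_induct2) (auto simp: interleave_def)

lemma nodes_parity_Ybe_Ybo: "(Ybe t \<longrightarrow> even (nodes t)) \<and> (Ybo t \<longrightarrow> odd (nodes t))"
  by (induction t) auto

lemma even_nodes_if_Ybe: "Ybe t \<Longrightarrow> even (nodes t)"
  using nodes_parity_Ybe_Ybo by blast

lemma odd_nodes_if_Ybo: "Ybo t \<Longrightarrow> odd (nodes t)"
  using nodes_parity_Ybe_Ybo by blast

lemma cblocks_not_Nil: "t \<noteq> Leaf \<Longrightarrow> cblocks f g t xs \<noteq> []"
  by (cases t) auto

lemma kblocks_alternate:
  fixes lm :: "'b::ring_1 \<Rightarrow> 'a \<Rightarrow> 'a" and \<kappa> :: "'a list \<Rightarrow> 'b"
  assumes lm_mult: "\<And>x y z. lm (x * y) z = lm x (lm y z)" and lm_one: "\<And>z. lm 1 z = z"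
    and "nodes t = length zs"
  shows "Ybe t \<Longrightarrow> kblocks lm \<kappa> t (alternate lm c d zs)
           = map (\<lambda>z. lm z d) (cblocks (kc lm \<kappa> c) (kc lm \<kappa> d) t zs)"
    and "Ybo t \<Longrightarrow> kblocks lm \<kappa> t (alternate lm c d zs)
           = map (\<lambda>z. lm z c) (cblocks (kc lm \<kappa> d) (kc lm \<kappa> c) t zs)"
  using assms(3)
proof (induction t arbitrary: c d zs)
  case Leaf
  { case 1 show ?case by simp }
  { case 2 then show ?case by simp }
next
  case (Node l r)
  let ?k = "nodes l"
  have split_lengths: "?k < length zs" "nodes l = length (take ?k zs)"
      "nodes r = length (drop (Suc ?k) zs)"
    if "nodes (Node l r) = length zs" for zs :: "'b list"
    using that by auto
  {
    case 1
    then have "Ybo l" "Ybe r" and lengths: "?k < length zs" "nodes l = length (take ?k zs)"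
        "nodes r = length (drop (Suc ?k) zs)"
      using split_lengths by auto
    then have "odd ?k" and "l \<noteq> Leaf"
      using odd_nodes_if_Ybo by auto
    with Node.IH(2)[OF \<open>Ybo l\<close> lengths(2), of c d] Node.IH(3)[OF \<open>Ybe r\<close> lengths(3), of c d]
    show ?case
      using lengths(1)
      by (simp add: cblocks_not_Nil take_alternate drop_alternate nth_alternate lm_mult kc_def)
  next
    case 2
    then have "Ybe l" "Ybe r" and lengths: "?k < length zs" "nodes l = length (take ?k zs)"
        "nodes r = length (drop (Suc ?k) zs)"
      using split_lengths by auto
    then have "even ?k"
      using even_nodes_if_Ybe by auto
    with Node.IH(1)[OF \<open>Ybe l\<close> lengths(2), of c d] Node.IH(3)[OF \<open>Ybe r\<close> lengths(3), of d c]
    show ?case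
      using lengths(1)
      by (cases "l = Leaf")
        (simp_all add: cblocks_not_Nil take_alternate drop_alternate nth_alternate
          lm_mult lm_one kc_def)
  }
qed

lemma ktree_alternate_Ybe:
  assumes "\<And>x y z. lm (x * y) z = lm x (lm y z)" and "\<And>z. lm 1 z = z"
    and "Ybe t" and "nodes t = length zs"
  shows "ktree lm \<kappa> t (alternate lm c d zs) = cup (kc lm \<kappa> c) (kc lm \<kappa> d) t zs"
  using kblocks_alternate(1)[OF assms(1,2,4,3), of \<kappa> c d] cblocks_not_Nil[of t]
  by (auto simp: ktree_def cup_def kc_def)

lemma ktree_alternate_Ybo:
  assumes "\<And>x y z. lm (x * y) z = lm x (lm y z)" and "\<And>z. lm 1 z = z"
    and "Ybo t" and "nodes t = length zs"
  shows "ktree lm \<kappa> t (alternate lm c d zs) = cup (kc lm \<kappa> d) (kc lm \<kappa> c) t zs"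
proof -
  have "t \<noteq> Leaf" using \<open>Ybo t\<close> by auto
  then show ?thesis
    using kblocks_alternate(2)[OF assms(1,2,4,3), of \<kappa> c d] cblocks_not_Nil[of t]
    by (auto simp: ktree_def cup_def kc_def)
qed

theorem lemma4:
  fixes iota :: "'k::field_char_0 \<Rightarrow> 'b::ring_1"
    and lm :: "'b \<Rightarrow> 'a::ring_1 \<Rightarrow> 'a" and rm :: "'a \<Rightarrow> 'b \<Rightarrow> 'a"
    and E :: "'a \<Rightarrow> 'b" and \<kappa> :: "'a list \<Rightarrow> 'b" and a b :: 'a
  assumes "B_prob_space iota lm rm E"
    and "is_cumulants lm E \<kappa>"
    and "free_pair lm rm E a b"
  shows "(\<forall>(\<tau>::ptree) (n::nat) (xs::'b list) (ys::'b list).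
            Ybe \<tau> \<and> nodes \<tau> = 2 * n \<and> length xs = n \<and> length ys = n \<longrightarrow>
            ktree lm \<kappa> \<tau> (alt_args lm a b xs ys)
              = cup (kc lm \<kappa> a) (kc lm \<kappa> b) \<tau> (interleave xs ys))
       \<and> (\<forall>(\<sigma>::ptree) (n::nat) (xs::'b list) (ys::'b list) (x::'b).
            Ybo \<sigma> \<and> nodes \<sigma> = 2 * n + 1 \<and> length xs = n \<and> length ys = n \<longrightarrow>
            ktree lm \<kappa> \<sigma> (alt_args lm a b xs ys @ [lm x a])
              = cup (kc lm \<kappa> b) (kc lm \<kappa> a) \<sigma> (interleave xs ys @ [x]))"
proof -
  have lm_mult: "\<And>x y z. lm (x * y) z = lm x (lm y z)" and lm_one: "\<And>z. lm 1 z = z"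
    using assms(1) unfolding B_prob_space_def by auto
  have "alt_args lm a b xs ys @ [lm x a] = alternate lm a b (interleave xs ys @ [x])"
    if "length xs = length ys" for xs ys :: "'b list" and x
    using that by (simp add: alt_args_eq_alternate alternate_append length_interleave)
  then show ?thesis
    by (auto simp: alt_args_eq_alternate length_interleave
        intro!: ktree_alternate_Ybe[OF lm_mult lm_one] ktree_alternate_Ybo[OF lm_mult lm_one])
qed

end
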